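(* Let $V$ be a vertex algebra and $g$ an automorphism of $V$ of finite order $T$. For all $m,n,p\in(1/T)\mathbb N$, $V\bullet_{g,m,p}^{\,n}\tilde O_{g,p,m}(V)\subseteq\tilde O_{g,n,m}(V)$ and $\tilde O_{g,n,p}(V)\bullet_{g,m,p}^{\,n}V\subseteq\tilde O_{g,n,m}(V)$. In particular $V\,\bar\bullet_{g,m}^{\,n}\,\tilde O_{g,n,m}(V)\subseteq\tilde O_{g,n,m}(V)$ and $\tilde O_{g,n,m}(V)\bullet_{g,m}^{\,n}V\subseteq\tilde O_{g,n,m}(V)$.
   Context: $V$ is a vertex algebra with vacuum $\mathbf{1}$, vertex operator $Y(v,x)=\sum_{k\in\mathbb Z}v_kx^{-k-1}$ and $\mathcal{D}v=v_{-2}\mathbf 1$; $g$ is an automorphism with $g^T=1$, and $V=\bigoplus_{r=0}^{T-1}V^r$, $V^r=\{v: gv=e^{-2\pi\sqrt{-1}r/T}v\}$. For $k,l\in\{0,\dots,T-1\}$ let $\delta_k(l)=1$ if $k\ge l$, $0$ if $k<l$, and $\delta_k(T)=0$. Write $n=\lfloor n\rfloor+\bar n/T$ with $\bar n\in\{0,\dots,T-1\}$. $(1+y)^\alpha$ is expanded in nonnegative powers of $y$; $Y(u,\log(1+y))v$ is $Y(u,x)v$ with $x=\log(1+y)$. For $u\in V^r$, $v\in V$, $m,n,p\in(1/T)\mathbb N$ with $\bar p-\bar n\equiv r\pmod T$: $u\bullet_{g,m,p}^{\,n}v=\sum_{i=0}^{\lfloor p\rfloor}(-1)^i\binom{\lfloor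 m\rfloor+\lfloor n\rfloor-\lfloor p\rfloor-1+\delta_{\bar m}(r)+\delta_{\bar n}(T-r)+i}{i}\operatorname{Res}_y\frac{(1+y)^{-1+\lfloor m\rfloor+\delta_{\bar m}(r)+r/T}}{y^{\lfloor m\rfloor+\lfloor n\rfloor-\lfloor p\rfloor+\delta_{\bar m}(r)+\delta_{\bar n}(T-r)+i}}Y(u,\log(1+y))v,$ and $0$ otherwise (bilinear extension). $\bar\bullet_{g,m}^{\,n}=\bullet_{g,m,n}^{\,n}$, $\bullet_{g,m}^{\,n}=\bullet_{g,m,m}^{\,n}$. For $u\in V^r$: $u\diamond_{g,m}^{\,n}v=\operatorname{Res}_y\frac{(1+y)^{-1+\delta_{\bar m}(r)+\lfloor m\rfloor+r/T}}{y^{\lfloor m\rfloor+\lfloor n\rfloor+\delta_{\bar m}(r)+\delta_{\bar n}(T-r)+1}}Y(u,\log(1+y))v$. $\tilde O'_{g,n,m}(V)=\mathrm{span}\{u\diamond_{g,m}^{\,n}v\}+\mathrm{span}\{(\mathcal D+m-n)u\}$. $\tilde O''_{g,n,m}(V)$ is the span of all $u\bullet_{g,m,p_3}^{\,n}\big((a\bullet_{g,p_1,p_2}^{\,p_3}b)\bullet_{g,m,p_1}^{\,p_3}c-a\bullet_{g,m,p_2}^{\,p_3}(b\bullet_{g,m,p_1}^{\,p_2}c)\big)$ ($a,b,c,u\in V$, $p_i\in(1/T)\mathbb N$); $\tilde O'''_{g,n,m}(V)=\sum_{p_1,p_2\in(1/T)\mathbb N}\big(V\bullet_{g,p_1,p_2}^{\,n}\tilde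 O'_{g,p_2,p_1}(V)\big)\bullet_{g,m,p_1}^{\,n}V$; $\tilde O_{g,n,m}(V)=\tilde O'_{g,n,m}(V)+\tilde O''_{g,n,m}(V)+\tilde O'''_{g,n,m}(V)$. For subspaces $A,B$, $A\bullet B$ denotes the span of all $a\bullet b$. *)

theory Defs
  imports Complex_Main "HOL-Library.Groups_Big_Fun" "HOL-Computational_Algebra.Formal_Power_Series" "HOL-Library.Set_Algebras"
begin

text \<open>A vertex algebra is a complex vector space (carrier type 'v, scalar multiplication smul)
  with vacuum vac and modes Y u k v = u_k v, so that Y(u,x)v = sum_k u_k v x^(-k-1). All sums in the Borcherds identity are
  finite by truncation; Sum_any sums over the finite support.\<close>

definition vertex_algebra ::
  "(complex \<Rightarrow> 'v::ab_group_add \<Rightarrow> 'v) \<Rightarrow> ('v \<Rightarrow> int \<Rightarrow> 'v \<Rightarrow> 'v) \<Rightarrow> 'v \<Rightarrow> bool" where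
  "vertex_algebra smul Y vac \<longleftrightarrow>
     vector_space smul \<and>
     (\<forall>k v. Vector_Spaces.linear smul smul (\<lambda>u. Y u k v)) \<and>
     (\<forall>u k. Vector_Spaces.linear smul smul (Y u k)) \<and>
     (\<forall>u v. \<exists>K. \<forall>k\<ge>K. Y u k v = 0) \<and>
     (\<forall>k v. Y vac k v = (if k = -1 then v else 0)) \<and>
     (\<forall>u k. k \<ge> 0 \<longrightarrow> Y u k vac = 0) \<and>
     (\<forall>u. Y u (-1) vac = u) \<and>
     (\<forall>u v w p q r.
        Sum_any (\<lambda>i::nat. smul (of_int p gchoose i) (Y (Y u (r + int i) v) (p + q - int i) w))
        = Sum_any (\<lambda>i::nat. smul ((-1) ^ i * (of_int r gchoose i))
              (Y u (p + r - int i) (Y v (q + int i) w)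
               - smul ((-1::complex) powi r) (Y v (q + r - int i) (Y u (p + int i) w)))))"

definition va_automorphism ::
  "(complex \<Rightarrow> 'v::ab_group_add \<Rightarrow> 'v) \<Rightarrow> ('v \<Rightarrow> int \<Rightarrow> 'v \<Rightarrow> 'v) \<Rightarrow> 'v \<Rightarrow> ('v \<Rightarrow> 'v) \<Rightarrow> bool" where
  "va_automorphism smul Y vac g \<longleftrightarrow>
     Vector_Spaces.linear smul smul g \<and> bij g \<and> g vac = vac \<and>
     (\<forall>u k v. g (Y u k v) = Y (g u) k (g v))"

definition eigsp :: "(complex \<Rightarrow> 'v \<Rightarrow> 'v) \<Rightarrow> ('v \<Rightarrow> 'v) \<Rightarrow> nat \<Rightarrow> nat \<Rightarrow> 'v set" where
  "eigsp smul g T r = {v. g v = smul (cis (- 2 * pi * real r / real T)) v}"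

text \<open>Projection of V onto V^r along the decomposition V = direct sum of the V^r (g^T = 1).\<close>
definition proj :: "(complex \<Rightarrow> 'v::ab_group_add \<Rightarrow> 'v) \<Rightarrow> ('v \<Rightarrow> 'v) \<Rightarrow> nat \<Rightarrow> nat \<Rightarrow> 'v \<Rightarrow> 'v" where
  "proj smul g T r u = smul (1 / of_nat T) (\<Sum>j<T. smul (cis (2 * pi * real r * real j / real T)) ((g ^^ j) u))"

definition fracs :: "nat \<Rightarrow> rat set" where
  "fracs T = {of_nat k / of_nat T | k. True}"

text \<open>n = floor n + bar n / T.\<close>
definition fl :: "rat \<Rightarrow> int" where "fl m = \<lfloor>m\<rfloor>"
definition bar :: "nat \<Rightarrow> rat \<Rightarrow> nat" where
  "bar T m = nat \<lfloor>of_nat T * (m - of_int \<lfloor>m\<rfloor>)\<rfloor>"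

definition delta :: "nat \<Rightarrow> nat \<Rightarrow> nat \<Rightarrow> int" where
  "delta T k l = (if l = T then 0 else if l \<le> k then 1 else 0)"

text \<open>Lser = log(1+y)/y as a power series (constant term 1);
  Lpow j = Lser^j for an integer j.\<close>
definition Lser :: "complex fps" where
  "Lser = Abs_fps (\<lambda>j. (-1) ^ j / of_nat (j + 1))"

definition Lpow :: "int \<Rightarrow> complex fps" where
  "Lpow j = (if j \<ge> 0 then Lser ^ nat j else inverse Lser ^ nat (- j))"

text \<open>Coefficient of y^(N-1) in (1+y)^a (log(1+y))^(-k-1), where
  (log(1+y))^(-k-1) = y^(-k-1) Lser^(-k-1) as a Laurent series in y.\<close>
definition rescoef :: "complex \<Rightarrow> int \<Rightarrow> int \<Rightarrow> complex" where
  "rescoef a N k = (if N + k < 0 then 0 else fps_nth (fps_binomial a * Lpow (- k - 1)) (nat (N + k)))"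

text \<open>res smul Y a N u v = Res_y (1+y)^a / y^N  Y(u, log(1+y)) v
  (finite sum by truncation).\<close>
definition res :: "(complex \<Rightarrow> 'v::ab_group_add \<Rightarrow> 'v) \<Rightarrow> ('v \<Rightarrow> int \<Rightarrow> 'v \<Rightarrow> 'v) \<Rightarrow> complex \<Rightarrow> int \<Rightarrow> 'v \<Rightarrow> 'v \<Rightarrow> 'v" where
  "res smul Y a N u v = Sum_any (\<lambda>k::int. smul (rescoef a N k) (Y u k v))"

definition bul_hom :: "(complex \<Rightarrow> 'v::ab_group_add \<Rightarrow> 'v) \<Rightarrow> ('v \<Rightarrow> int \<Rightarrow> 'v \<Rightarrow> 'v) \<Rightarrow> nat \<Rightarrow> nat
    \<Rightarrow> rat \<Rightarrow> rat \<Rightarrow> rat \<Rightarrow> 'v \<Rightarrow> 'v \<Rightarrow> 'v" where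
  "bul_hom smul Y T r m p n u v =
    (if (int (bar T p) - int (bar T n)) mod int T = int r mod int T then
       (\<Sum>i\<in>{0..nat (fl p)}.
          smul ((-1) ^ i * (of_int (fl m + fl n - fl p - 1 + delta T (bar T m) r + delta T (bar T n) (T - r) + int i) gchoose i))
            (res smul Y (-1 + of_int (fl m) + of_int (delta T (bar T m) r) + of_nat r / of_nat T)
                 (fl m + fl n - fl p + delta T (bar T m) r + delta T (bar T n) (T - r) + int i) u v))
     else 0)"

definition bul :: "(complex \<Rightarrow> 'v::ab_group_add \<Rightarrow> 'v) \<Rightarrow> ('v \<Rightarrow> int \<Rightarrow> 'v \<Rightarrow> 'v) \<Rightarrow> ('v \<Rightarrow> 'v) \<Rightarrow> nat
    \<Rightarrow> rat \<Rightarrow> rat \<Rightarrow> rat \<Rightarrow> 'v \<Rightarrow> 'v \<Rightarrow> 'v" where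
  "bul smul Y g T m p n u v = (\<Sum>r<T. bul_hom smul Y T r m p n (proj smul g T r u) v)"

definition diam_hom :: "(complex \<Rightarrow> 'v::ab_group_add \<Rightarrow> 'v) \<Rightarrow> ('v \<Rightarrow> int \<Rightarrow> 'v \<Rightarrow> 'v) \<Rightarrow> nat \<Rightarrow> nat
    \<Rightarrow> rat \<Rightarrow> rat \<Rightarrow> 'v \<Rightarrow> 'v \<Rightarrow> 'v" where
  "diam_hom smul Y T r m n u v =
     res smul Y (-1 + of_int (delta T (bar T m) r) + of_int (fl m) + of_nat r / of_nat T)
         (fl m + fl n + delta T (bar T m) r + delta T (bar T n) (T - r) + 1) u v"

definition diam :: "(complex \<Rightarrow> 'v::ab_group_add \<Rightarrow> 'v) \<Rightarrow> ('v \<Rightarrow> int \<Rightarrow> 'v \<Rightarrow> 'v) \<Rightarrow> ('v \<Rightarrow> 'v) \<Rightarrow> nat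
    \<Rightarrow> rat \<Rightarrow> rat \<Rightarrow> 'v \<Rightarrow> 'v \<Rightarrow> 'v" where
  "diam smul Y g T m n u v = (\<Sum>r<T. diam_hom smul Y T r m n (proj smul g T r u) v)"

definition bulset :: "(complex \<Rightarrow> 'v::ab_group_add \<Rightarrow> 'v) \<Rightarrow> ('v \<Rightarrow> int \<Rightarrow> 'v \<Rightarrow> 'v) \<Rightarrow> ('v \<Rightarrow> 'v) \<Rightarrow> nat
    \<Rightarrow> rat \<Rightarrow> rat \<Rightarrow> rat \<Rightarrow> 'v set \<Rightarrow> 'v set \<Rightarrow> 'v set" where
  "bulset smul Y g T m p n A B = module.span smul {bul smul Y g T m p n a b | a b. a \<in> A \<and> b \<in> B}"

definition O1 :: "(complex \<Rightarrow> 'v::ab_group_add \<Rightarrow> 'v) \<Rightarrow> ('v \<Rightarrow> int \<Rightarrow> 'v \<Rightarrow> 'v) \<Rightarrow> 'v \<Rightarrow> ('v \<Rightarrow> 'v) \<Rightarrow> nat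
    \<Rightarrow> rat \<Rightarrow> rat \<Rightarrow> 'v set" where
  "O1 smul Y vac g T n m =
     module.span smul {diam smul Y g T m n u v | u v. True}
     + module.span smul {Y u (-2) vac + smul (of_rat (m - n)) u | u. True}"

definition O2 :: "(complex \<Rightarrow> 'v::ab_group_add \<Rightarrow> 'v) \<Rightarrow> ('v \<Rightarrow> int \<Rightarrow> 'v \<Rightarrow> 'v) \<Rightarrow> ('v \<Rightarrow> 'v) \<Rightarrow> nat
    \<Rightarrow> rat \<Rightarrow> rat \<Rightarrow> 'v set" where
  "O2 smul Y g T n m = module.span smul
     {bul smul Y g T m p3 n u
        (bul smul Y g T m p1 p3 (bul smul Y g T p1 p2 p3 a b) c
         - bul smul Y g T m p2 p3 a (bul smul Y g T m p1 p2 b c))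
      | u a b c p1 p2 p3. p1 \<in> fracs T \<and> p2 \<in> fracs T \<and> p3 \<in> fracs T}"

definition O3 :: "(complex \<Rightarrow> 'v::ab_group_add \<Rightarrow> 'v) \<Rightarrow> ('v \<Rightarrow> int \<Rightarrow> 'v \<Rightarrow> 'v) \<Rightarrow> 'v \<Rightarrow> ('v \<Rightarrow> 'v) \<Rightarrow> nat
    \<Rightarrow> rat \<Rightarrow> rat \<Rightarrow> 'v set" where
  "O3 smul Y vac g T n m = module.span smul
     (\<Union>{bulset smul Y g T m p1 n (bulset smul Y g T p1 p2 n UNIV (O1 smul Y vac g T p2 p1)) UNIV
         | p1 p2. p1 \<in> fracs T \<and> p2 \<in> fracs T})"

definition Ot :: "(complex \<Rightarrow> 'v::ab_group_add \<Rightarrow> 'v) \<Rightarrow> ('v \<Rightarrow> int \<Rightarrow> 'v \<Rightarrow> 'v) \<Rightarrow> 'v \<Rightarrow> ('v \<Rightarrow> 'v) \<Rightarrow> nat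
    \<Rightarrow> rat \<Rightarrow> rat \<Rightarrow> 'v set" where
  "Ot smul Y vac g T n m = O1 smul Y vac g T n m + O2 smul Y g T n m + O3 smul Y vac g T n m"

end

theory Submission
  imports Defs
begin

(* All products are bilinear, so it suffices to treat generators of the three summands
   O', O'', O''' of O~.  Two unit laws do the work.  The vacuum is a left unit,
   vac *_{m,n}^n z = z.  It is a right unit modulo O'_{n,m}: since Y(u,x) vac = e^{xD} u and D
   acts as -(m-n) modulo (D+m-n)V, every residue in u *_{m,m}^n vac reduces to a binomial
   coefficient times u.  On the eigencomponent selected by the product the coefficients add up
   to 1; on any other component the diamond product, which lies in O', is a binomial coefficient
   with non-integral top entry times that component, so the component itself lies in O'.
   The unit laws turn generators of O' into generators of O''', and the pentagon identity for
   the associators (a*b)*c - a*(b*c) rewrites products with generators of O'' and O''' as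
   combinations of generators of O'' and O'''. *)

lemma sum_cis_roots_of_unity:
  fixes T :: nat and d :: int
  assumes T: "T > 0"
  shows "(\<Sum>j<T. cis (2*pi*real_of_int d*real j/real T)) = (if int T dvd d then of_nat T else 0)"
proof -
  let ?w = "cis (2*pi*real_of_int d/real T)"
  have pw: "cis (2*pi*real_of_int d*real j/real T) = ?w ^ j" for j
    by (simp add: DeMoivre algebra_simps)
  show ?thesis
  proof (cases "int T dvd d")
    case True
    then obtain k where k: "d = int T * k" by blast
    have "cis (2*pi*real_of_int d*real j/real T) = cis (2*pi*real_of_int (k * int j))" for j
      using T by (simp add: k field_simps)
    then show ?thesis using True by (simp add: cis_multiple_2pi)
  next
    case False
    have "?w \<noteq> 1"
    proof
      assume "?w = 1"
      then have "cos (2*pi*real_of_int d/real T) = 1"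
        by (metis Re_complex_of_real cis.sel(1) one_complex.sel(1))
      then obtain k :: int where "2*pi*real_of_int d/real T = real_of_int k * 2 * pi"
        using cos_one_2pi_int by blast
      then have "real_of_int d = real_of_int (k * int T)" using T by (simp add: field_simps)
      then show False using False by (simp only: of_int_eq_iff) simp
    qed
    moreover have "?w ^ T = 1"
      using T by (simp add: DeMoivre cis_multiple_2pi)
    ultimately show ?thesis using geometric_sum[of ?w T] False pw by simp
  qed
qed

lemma gbinomial_minus_two: "(-1::complex) ^ i * ((- 2) gchoose i) = of_nat i + 1"
proof -
  have "((- 2) gchoose i :: complex) = (-1) ^ i * (of_nat (Suc i) gchoose i)"
    using gbinomial_minus[of "2::complex" i] by (simp add: add.commute)
  also have "(of_nat (Suc i) gchoose i :: complex) = of_nat (Suc i)"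
    by (simp only: binomial_gbinomial[symmetric] binomial_Suc_n)
  finally show ?thesis by (simp add: power_mult_distrib[symmetric])
qed

lemma gbinomial_nonzero_if_not_nat:
  assumes "\<And>j::nat. z \<noteq> of_nat j"
  shows "(z::complex) gchoose k \<noteq> 0"
proof
  assume "z gchoose k = 0"
  then obtain i where "i < k" "z - of_nat k + 1 = - of_nat i"
    using pochhammer_eq_0_iff unfolding gbinomial_pochhammer' by auto
  then have "z = of_nat (k - 1 - i)" by (simp add: of_nat_diff algebra_simps)
  then show False using assms by blast
qed

lemma int_plus_fraction_not_nat:
  assumes "T > 0" and "\<not> int T dvd q"
  shows "of_int c + of_int q / of_nat T \<noteq> (of_nat j :: complex)"
proof
  assume "of_int c + of_int q / of_nat T = (of_nat j :: complex)"
  then have "(of_int q :: complex) = of_int (int T * (int j - c))"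
    using assms(1) by (simp add: field_simps)
  then show False using assms(2) by (simp only: of_int_eq_iff) simp
qed

lemma X_times_Lser: "fps_X * Lser = fps_ln (1::complex)"
  by (rule fps_ext) (simp add: Lser_def fps_ln_nth)

lemma fps_exp_compose_ln: "fps_exp l oo fps_ln (1::complex) = fps_binomial l"
proof -
  let ?E = "fps_exp l oo fps_ln (1::complex)"
  have "fps_deriv ?E = (fps_deriv (fps_exp l) oo fps_ln 1) * fps_deriv (fps_ln 1)"
    by (rule fps_compose_deriv) simp
  also have "\<dots> = fps_const l * ?E / (1 + fps_X)"
    by (simp add: fps_ln_deriv fps_const_mult_apply_left fps_divide_unit)
  finally show ?thesis using fps_binomial_ODE_unique'[of ?E l] by simp
qed

(* rescoef a N (-j-1) is the coefficient of y^(N-1) in (1+y)^a log(1+y)^j, so the sum is that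
   coefficient of (1+y)^a exp (l log(1+y)) = (1+y)^(a+l). *)

lemma rescoef_exp_sum:
  assumes N: "N \<ge> 1"
  shows "(\<Sum>j<nat N. rescoef a N (- int j - 1) * l ^ j / fact j) = (a + l) gchoose (nat N - 1)"
proof -
  define M where "M = nat N - 1"
  have NM: "nat N = Suc M" using N unfolding M_def by simp
  let ?A = "fps_binomial a"
  let ?P = "fps_ln (1::complex)"
  have coef: "rescoef a N (- int j - 1) = fps_nth (?A * ?P ^ j) M" if "j \<le> M" for j
  proof -
    have "nat (N + (- int j - 1)) = M - j" "\<not> N + (- int j - 1) < 0" using that NM by auto
    then have "rescoef a N (- int j - 1) = fps_nth (fps_X ^ j * (?A * Lser ^ j)) M"
      using that unfolding rescoef_def Lpow_def by (simp add: fps_X_power_mult_nth)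
    also have "fps_X ^ j * (?A * Lser ^ j) = ?A * ?P ^ j"
      unfolding X_times_Lser[symmetric] by (simp add: power_mult_distrib algebra_simps)
    finally show ?thesis .
  qed
  have exp_ln: "(\<Sum>j\<le>M. l ^ j / fact j * fps_nth (?P ^ j) k) = fps_nth (fps_exp l oo ?P) k"
    if "k \<le> M" for k
  proof -
    have "fps_nth (?P ^ j) k = 0" if "j > k" for j
      using startsby_zero_power_prefix[of ?P j] that by simp
    then have "(\<Sum>j\<le>M. l ^ j / fact j * fps_nth (?P ^ j) k) = (\<Sum>j\<in>{0..k}. l ^ j / fact j * fps_nth (?P ^ j) k)"
      using that by (intro sum.mono_neutral_right) auto
    then show ?thesis by (simp add: fps_compose_nth)
  qed
  have "(\<Sum>j<nat N. rescoef a N (- int j - 1) * l ^ j / fact j)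
      = (\<Sum>j\<le>M. l ^ j / fact j * (\<Sum>i\<le>M. fps_nth ?A i * fps_nth (?P ^ j) (M - i)))"
    unfolding NM lessThan_Suc_atMost by (intro sum.cong) (simp_all add: coef fps_mult_nth atLeast0AtMost)
  also have "\<dots> = (\<Sum>i\<le>M. fps_nth ?A i * (\<Sum>j\<le>M. l ^ j / fact j * fps_nth (?P ^ j) (M - i)))"
    unfolding sum_distrib_left by (subst sum.swap) (simp add: mult.left_commute)
  also have "\<dots> = fps_nth (?A * (fps_exp l oo ?P)) M"
    using exp_ln by (simp add: fps_mult_nth atLeast0AtMost)
  also have "\<dots> = (a + l) gchoose M"
    by (simp add: fps_exp_compose_ln fps_binomial_add_mult[symmetric])
  finally show ?thesis unfolding M_def .
qed

lemma sum_lessThan_Suc_cyclic: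
  fixes f :: "nat \<Rightarrow> 'a::cancel_comm_monoid_add"
  assumes "f T = f 0"
  shows "(\<Sum>j<T. f (Suc j)) = (\<Sum>j<T. f j)"
proof -
  have "(\<Sum>j<T. f (Suc j)) + f 0 = (\<Sum>j<T. f j) + f T"
    unfolding sum.lessThan_Suc[symmetric] sum.lessThan_Suc_shift by (simp add: add.commute)
  then show ?thesis using assms by simp
qed

lemma (in vector_space) subspace_set_plus:
  assumes "subspace A" and "subspace B"
  shows "subspace (A + B)"
proof -
  have "A + B = {x + y | x y. x \<in> A \<and> y \<in> B}" by (auto simp: set_plus_def)
  then show ?thesis using subspace_sums[OF assms] by simp
qed

lemma (in vector_space) subset_set_plus_left: "subspace B \<Longrightarrow> A \<subseteq> A + B"
  using set_plus_intro[of _ A 0 B] subspace_0[of B] by force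

lemma (in vector_space_pair) linear_maps_span_into:
  assumes "Vector_Spaces.linear s1 s2 f" and "vs2.subspace W" and "\<And>s. s \<in> S \<Longrightarrow> f s \<in> W"
    and "x \<in> vs1.span S"
  shows "f x \<in> W"
proof -
  have "vs2.span (f ` S) \<subseteq> W" using assms(2,3) by (intro vs2.span_minimal) auto
  then show ?thesis using assms(4) linear_span_image[OF assms(1), of S] by blast
qed

lemma (in vector_space_pair) linear_if_zero:
  "Vector_Spaces.linear s1 s2 f \<Longrightarrow> Vector_Spaces.linear s1 s2 (\<lambda>x. if P then f x else 0)"
  by (cases P) (simp_all add: linear_zero)

lemma (in vector_space_pair) linear_Sum_any:
  assumes "\<And>k. Vector_Spaces.linear s1 s2 (F k)" and "\<And>v. finite {k. F k v \<noteq> 0}"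
  shows "Vector_Spaces.linear s1 s2 (\<lambda>v. Sum_any (\<lambda>k. F k v))"
proof -
  have scale: "Sum_any (\<lambda>k. F k (s1 c v)) = s2 c (Sum_any (\<lambda>k. F k v))" for c v
  proof -
    let ?S = "{k. F k v \<noteq> 0}"
    have "{k. F k (s1 c v) \<noteq> 0} \<subseteq> ?S" using linear_scale[OF assms(1)] by auto
    then show ?thesis
      using assms(2)[of v] linear_scale[OF assms(1)]
      by (simp add: Sum_any.expand_superset[of ?S] vs2.scale_sum_right)
  qed
  have add: "Sum_any (\<lambda>k. F k (x + y)) = Sum_any (\<lambda>k. F k x) + Sum_any (\<lambda>k. F k y)" for x y
    using Sum_any.distrib[OF assms(2)[of x] assms(2)[of y]] by (simp add: linear_add[OF assms(1)])
  show ?thesis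
    unfolding Vector_Spaces.linear_iff using vs1.vector_space_axioms vs2.vector_space_axioms add scale
    by blast
qed

lemma fracs_floor_bar:
  assumes "T > 0" and "m \<in> fracs T"
  obtains k :: nat where "m = of_nat k / of_nat T" "fl m = int (k div T)" "bar T m = k mod T"
proof -
  obtain k :: nat where k: "m = of_nat k / of_nat T" using assms(2) unfolding fracs_def by blast
  have fl: "\<lfloor>m\<rfloor> = int (k div T)" unfolding k by (simp add: floor_divide_of_nat_eq)
  have "(of_nat k :: rat) = of_nat T * of_nat (k div T) + of_nat (k mod T)"
    by (metis mult_div_mod_eq of_nat_add of_nat_mult)
  then have "of_nat T * (m - of_int \<lfloor>m\<rfloor>) = of_nat (k mod T)"
    unfolding fl using assms(1) k by (simp add: field_simps)
  then have "bar T m = k mod T" unfolding bar_def by simp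
  then show thesis using that k fl unfolding fl_def by blast
qed

lemma fracs_fl_nonneg: "T > 0 \<Longrightarrow> m \<in> fracs T \<Longrightarrow> fl m \<ge> 0"
  using fracs_floor_bar[of T m] by force

lemma fracs_bar_less: "T > 0 \<Longrightarrow> m \<in> fracs T \<Longrightarrow> bar T m < T"
  using fracs_floor_bar[of T m] by force

lemma of_rat_fracs:
  assumes "T > 0" and "m \<in> fracs T"
  shows "(of_rat m :: complex) = of_int (fl m) + of_nat (bar T m) / of_nat T"
proof -
  obtain k where k: "m = of_nat k / of_nat T" "fl m = int (k div T)" "bar T m = k mod T"
    using fracs_floor_bar[OF assms] by blast
  have "(of_nat k :: complex) = of_nat T * of_nat (k div T) + of_nat (k mod T)"
    by (metis mult_div_mod_eq of_nat_add of_nat_mult)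
  then show ?thesis using assms(1) unfolding k(2,3) unfolding k(1) by (simp add: of_rat_divide field_simps)
qed

lemma fracs_exponent_diff:
  assumes "T > 0" and "m \<in> fracs T" and "n \<in> fracs T"
  shows "-1 + of_int (fl m) + of_int d + of_nat r / of_nat T - of_rat (m - n)
       = of_int (-1 + d + fl n) + of_int (int r + int (bar T n) - int (bar T m)) / (of_nat T :: complex)"
  using of_rat_fracs[OF assms(1,2)] of_rat_fracs[OF assms(1,3)] assms(1)
  by (simp add: of_rat_diff field_simps)

lemma mod_eq_iff_residue_index:
  assumes "r < T"
  shows "(d mod int T = int r mod int T) \<longleftrightarrow> r = nat (d mod int T)"
  using assms by auto

lemma dvd_iff_residue_index:
  fixes T bm bn r :: nat
  assumes "r < T"
  shows "int T dvd int r + int bn - int bm \<longleftrightarrow> r = nat ((int bm - int bn) mod int T)"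
proof -
  have "int T dvd int r + int bn - int bm \<longleftrightarrow> int T dvd int r - (int bm - int bn)"
    by (simp add: algebra_simps)
  also have "\<dots> \<longleftrightarrow> (int bm - int bn) mod int T = int r mod int T"
    by (simp only: mod_eq_dvd_iff[symmetric] eq_commute)
  finally show ?thesis using mod_eq_iff_residue_index[OF assms] by simp
qed

lemma delta_residue_index:
  fixes bm bn T :: nat
  assumes "bm < T" and "bn < T"
  defines "r \<equiv> nat ((int bm - int bn) mod int T)"
  shows "delta T bm r + delta T bn (T - r) = 1"
    and "int r + int bn - int bm = int T * (1 - delta T bm r)"
proof -
  have "bn \<le> bm \<and> r = bm - bn \<or> bm < bn \<and> r = T + bm - bn"
  proof (cases "bn \<le> bm")
    case True
    then show ?thesis using assms by (simp add: of_nat_diff)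
  next
    case False
    have "(int bm - int bn) mod int T = (int bm - int bn + int T) mod int T" by simp
    also have "\<dots> = int bm - int bn + int T" using assms False by (intro mod_pos_pos_trivial) auto
    finally show ?thesis using False unfolding r_def by simp
  qed
  then show "delta T bm r + delta T bn (T - r) = 1" "int r + int bn - int bm = int T * (1 - delta T bm r)"
    using assms unfolding delta_def by auto
qed

section \<open>Eigenspace projections\<close>

locale periodic_endomorphism = vector_space smul
  for smul :: "complex \<Rightarrow> 'v::ab_group_add \<Rightarrow> 'v" +
  fixes g :: "'v \<Rightarrow> 'v" and T :: nat
  assumes linear_g: "Vector_Spaces.linear smul smul g"
    and T_pos: "T > 0" and g_order: "g ^^ T = id"
begin

sublocale endo: vector_space_pair smul smul ..

lemma linear_funpow_g: "Vector_Spaces.linear smul smul (g ^^ j)"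
  by (induction j) (simp_all add: linear_ident Vector_Spaces.linear_compose[OF _ linear_g, unfolded comp_def])

lemma linear_proj: "Vector_Spaces.linear smul smul (proj smul g T r)"
  unfolding proj_def
  by (intro endo.linear_compose_scale_right endo.linear_compose_sum ballI linear_funpow_g)

lemma proj_fixed_point:
  assumes "g x = x" and "r < T"
  shows "proj smul g T r x = (if r = 0 then x else 0)"
proof -
  have "(g ^^ j) x = x" for j by (induction j) (simp_all add: assms(1))
  then have "proj smul g T r x = smul (1/of_nat T) (smul (\<Sum>j<T. cis (2*pi*real_of_int (int r)*real j/real T)) x)"
    unfolding proj_def by (simp add: scale_sum_left)
  then show ?thesis
    using sum_cis_roots_of_unity[OF T_pos, of "int r"] assms(2) T_pos by (auto simp: zdvd_imp_le)
qed

lemma g_proj: "g (proj smul g T r x) = smul (cis (- 2*pi*real r/real T)) (proj smul g T r x)"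
proof -
  let ?\<omega> = "\<lambda>j::nat. cis (2*pi*real r*real j/real T)"
  have shift: "cis (- 2*pi*real r/real T) * ?\<omega> (Suc j) = ?\<omega> j" for j
    unfolding cis_mult using T_pos by (simp add: field_simps)
  have period: "?\<omega> T = ?\<omega> 0"
    using T_pos by (simp add: cis_multiple_2pi)
  have "g (proj smul g T r x) = smul (1/of_nat T) (\<Sum>j<T. smul (?\<omega> j) ((g ^^ Suc j) x))"
    unfolding proj_def by (simp add: endo.linear_scale[OF linear_g] endo.linear_sum[OF linear_g])
  also have "(\<Sum>j<T. smul (?\<omega> j) ((g ^^ Suc j) x))
      = smul (cis (- 2*pi*real r/real T)) (\<Sum>j<T. smul (?\<omega> (Suc j)) ((g ^^ Suc j) x))"
    by (simp only: scale_sum_right scale_scale shift)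
  also have "(\<Sum>j<T. smul (?\<omega> (Suc j)) ((g ^^ Suc j) x)) = (\<Sum>j<T. smul (?\<omega> j) ((g ^^ j) x))"
    by (rule sum_lessThan_Suc_cyclic) (use period in \<open>simp add: g_order\<close>)
  finally show ?thesis unfolding proj_def by (simp add: scale_left_commute)
qed

lemma funpow_g_proj: "(g ^^ j) (proj smul g T r x) = smul (cis (- 2*pi*real r*real j/real T)) (proj smul g T r x)"
proof (induction j)
  case (Suc j)
  have "cis (- 2*pi*real r*real j/real T) * cis (- 2*pi*real r/real T) = cis (- 2*pi*real r*real (Suc j)/real T)"
    unfolding cis_mult using T_pos by (simp add: field_simps)
  with Suc show ?case by (simp add: endo.linear_scale[OF linear_g] g_proj)
qed simp

lemma proj_proj:
  assumes "s < T" and "r < T"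
  shows "proj smul g T s (proj smul g T r x) = (if s = r then proj smul g T r x else 0)"
proof -
  have "proj smul g T s (proj smul g T r x) = smul (1/of_nat T)
      (smul (\<Sum>j<T. cis (2*pi*real_of_int (int s - int r)*real j/real T)) (proj smul g T r x))"
    unfolding proj_def[of smul g T s] funpow_g_proj
    by (simp add: scale_sum_left cis_mult algebra_simps diff_divide_distrib)
  moreover have "int T dvd (int s - int r) \<longleftrightarrow> s = r"
    using assms by (simp add: mod_eq_dvd_iff[symmetric])
  ultimately show ?thesis using sum_cis_roots_of_unity[OF T_pos, of "int s - int r"] T_pos by auto
qed

lemma sum_proj: "(\<Sum>r<T. proj smul g T r x) = x"
proof -
  have roots: "(\<Sum>r<T. cis (2*pi*real r*real j/real T)) = (if j = 0 then of_nat T else 0)" if "j < T" for j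
    using sum_cis_roots_of_unity[OF T_pos, of "int j"] that by (auto simp: mult_ac dest: dvd_imp_le)
  have "(\<Sum>r<T. proj smul g T r x) = smul (1/of_nat T) (\<Sum>j<T. smul (\<Sum>r<T. cis (2*pi*real r*real j/real T)) ((g ^^ j) x))"
    unfolding proj_def scale_sum_right[symmetric] scale_sum_left by (subst sum.swap) simp
  also have "(\<Sum>j<T. smul (\<Sum>r<T. cis (2*pi*real r*real j/real T)) ((g ^^ j) x))
      = (\<Sum>j<T. if j = 0 then smul (of_nat T) x else 0)"
    by (rule sum.cong) (simp_all add: roots)
  finally show ?thesis using T_pos by simp
qed

end

locale vertex_algebra_automorphism =
  fixes smul :: "complex \<Rightarrow> 'v::ab_group_add \<Rightarrow> 'v"
    and Y :: "'v \<Rightarrow> int \<Rightarrow> 'v \<Rightarrow> 'v" and vac :: 'v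
    and g :: "'v \<Rightarrow> 'v" and T :: nat
  assumes VA: "vertex_algebra smul Y vac"
    and aut: "va_automorphism smul Y vac g"
    and order_pos: "T > 0" and order: "g ^^ T = id"
begin

sublocale periodic_endomorphism smul g T
proof (intro periodic_endomorphism.intro periodic_endomorphism_axioms.intro)
  show "vector_space smul" using VA unfolding vertex_algebra_def by blast
  show "Vector_Spaces.linear smul smul g" using aut unfolding va_automorphism_def by blast
qed (fact order_pos order)+

lemma linear_Y_left: "Vector_Spaces.linear smul smul (\<lambda>u. Y u k v)"
  and linear_Y_right: "Vector_Spaces.linear smul smul (Y u k)"
  and Y_truncation: "\<exists>K. \<forall>k\<ge>K. Y u k v = 0"
  and vacuum_Y: "Y vac k v = (if k = -1 then v else 0)"
  and Y_vacuum_nonneg: "k \<ge> 0 \<Longrightarrow> Y u k vac = 0"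
  and Y_vacuum_create: "Y u (-1) vac = u"
  and borcherds: "Sum_any (\<lambda>i::nat. smul (of_int p gchoose i) (Y (Y u (r + int i) v) (p + q - int i) w))
        = Sum_any (\<lambda>i::nat. smul ((-1) ^ i * (of_int r gchoose i))
              (Y u (p + r - int i) (Y v (q + int i) w)
               - smul ((-1::complex) powi r) (Y v (q + r - int i) (Y u (p + int i) w))))"
  using VA unfolding vertex_algebra_def by blast+

lemma Y_zero_right [simp]: "Y u k 0 = 0"
  by (rule endo.linear_0[OF linear_Y_right])

lemma g_vacuum: "g vac = vac"
  using aut unfolding va_automorphism_def by blast

lemma finite_res_support: "finite {k. smul (rescoef a N k) (Y u k v) \<noteq> 0}"
proof -
  obtain K where "\<forall>k\<ge>K. Y u k v = 0" using Y_truncation by blast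
  then have "{k. smul (rescoef a N k) (Y u k v) \<noteq> 0} \<subseteq> {-N..<K}"
    by (auto simp: rescoef_def not_le)
  then show ?thesis by (rule finite_subset) simp
qed

lemma linear_res_left: "Vector_Spaces.linear smul smul (\<lambda>u. res smul Y a N u v)"
  and linear_res_right: "Vector_Spaces.linear smul smul (res smul Y a N u)"
  unfolding res_def[abs_def]
  by (intro endo.linear_Sum_any endo.linear_compose_scale_right linear_Y_left linear_Y_right
      finite_res_support)+

lemma res_vacuum_left: "res smul Y a N vac z = smul (rescoef a N (-1)) z"
proof -
  have "(\<lambda>k. smul (rescoef a N k) (Y vac k z)) = (\<lambda>k. if k = -1 then smul (rescoef a N k) z else 0)"
    by (auto simp: vacuum_Y)
  then show ?thesis unfolding res_def by (simp only: Sum_any.delta)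
qed

abbreviation bullet :: "rat \<Rightarrow> rat \<Rightarrow> rat \<Rightarrow> 'v \<Rightarrow> 'v \<Rightarrow> 'v" where
  "bullet m p n a b \<equiv> bul smul Y g T m p n a b"

lemma linear_bul_hom_left: "Vector_Spaces.linear smul smul (\<lambda>u. bul_hom smul Y T r m p n u v)"
  and linear_bul_hom_right: "Vector_Spaces.linear smul smul (bul_hom smul Y T r m p n u)"
  unfolding bul_hom_def[abs_def]
  by (intro endo.linear_compose_sum endo.linear_compose_scale_right ballI linear_res_left
      linear_res_right endo.linear_if_zero)+

lemma linear_bullet_left: "Vector_Spaces.linear smul smul (\<lambda>a. bullet m p n a b)"
  unfolding bul_def
  by (intro endo.linear_compose_sum ballI
      Vector_Spaces.linear_compose[OF linear_proj linear_bul_hom_left, unfolded comp_def])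

lemma linear_bullet_right: "Vector_Spaces.linear smul smul (bullet m p n a)"
  unfolding bul_def[abs_def]
  by (intro endo.linear_compose_sum ballI linear_bul_hom_right)

section \<open>The translation operator\<close>

definition D :: "'v \<Rightarrow> 'v" where "D u = Y u (-2) vac"

lemma D_summand_collapse:
  fixes f :: "int \<Rightarrow> 'v"
  shows "smul (of_nat i + 1) ((if q + int i = -1 then f (-2 - int i) else 0)
                               - (if q - 2 - int i = -1 then f (int i) else 0))
       = (if i = nat (\<bar>q\<bar> - 1) then smul (- of_int q) (f (q - 1)) else 0)"
proof -
  consider "q + int i = -1" | "q - 2 - int i = -1" | "q + int i \<noteq> -1" "q - 2 - int i \<noteq> -1"
    by blast
  then show ?thesis
  proof cases
    case 1
    then have i: "int i = -1 - q" by simp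
    then have "(of_nat i :: complex) = of_int (-1 - q)" by (metis of_int_of_nat_eq)
    then have "of_nat i + 1 = - (of_int q :: complex)" by simp
    moreover have "f (-2 - int i) = f (q - 1)"
      using i by (intro arg_cong[where f=f]) simp
    moreover have "nat (\<bar>q\<bar> - 1) = i" "q - 2 - int i \<noteq> -1"
      using i by auto
    ultimately show ?thesis using 1 by simp
  next
    case 2
    then have i: "int i = q - 1" by simp
    then have "(of_nat i :: complex) = of_int (q - 1)" by (metis of_int_of_nat_eq)
    then have "of_nat i + 1 = (of_int q :: complex)" by simp
    moreover have "nat (\<bar>q\<bar> - 1) = i" "q + int i \<noteq> -1"
      using i by auto
    ultimately show ?thesis using 2 i by simp
  next
    case 3
    show ?thesis
    proof (cases "q = 0")
      case False
      with 3 have "i \<noteq> nat (\<bar>q\<bar> - 1)" by arith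
      with 3 show ?thesis by simp
    qed (use 3 in simp)
  qed
qed

(* Borcherds' identity with p = 0, r = -2 and v = vac. *)

lemma Y_D: "Y (D u) q w = smul (- of_int q) (Y u (q - 1) w)"
proof -
  have Y_if: "Y a k (if P then x else 0) = (if P then Y a k x else 0)" for a k P x
    by simp
  have "Y (D u) q w = Sum_any (\<lambda>i::nat. if i = 0 then Y (D u) q w else 0)"
    by simp
  also have "\<dots> = Sum_any (\<lambda>i::nat. smul (of_int 0 gchoose i) (Y (Y u (-2 + int i) vac) (0 + q - int i) w))"
    by (rule Sum_any.cong) (simp add: D_def gbinomial_0_left)
  also have "\<dots> = Sum_any (\<lambda>i. smul (of_nat i + 1) ((if q + int i = -1 then Y u (-2 - int i) w else 0)
                                   - (if q - 2 - int i = -1 then Y u (int i) w else 0)))"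
    unfolding borcherds by (simp add: gbinomial_minus_two power_int_def vacuum_Y Y_if)
  also have "\<dots> = Sum_any (\<lambda>i. if i = nat (\<bar>q\<bar> - 1) then smul (- of_int q) (Y u (q - 1) w) else 0)"
    using D_summand_collapse[where f = "\<lambda>k. Y u k w"] by simp
  finally show ?thesis by simp
qed

lemma Y_funpow_D: "Y ((D ^^ j) u) q w = smul (\<Prod>i<j. - of_int (q - int i)) (Y u (q - int j) w)"
proof (induction j arbitrary: q)
  case (Suc j)
  have "(\<Prod>i<Suc j. - of_int (q - int i)) = - of_int q * (\<Prod>i<j. - (of_int (q - 1 - int i) :: complex))"
    unfolding prod.lessThan_Suc_shift by (simp add: algebra_simps)
  moreover have "q - int (Suc j) = q - 1 - int j" by simp
  ultimately show ?case by (simp only: funpow.simps comp_apply Y_D Suc scale_scale)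
qed simp

lemma Y_vacuum_neg: "Y u (- int j - 1) vac = smul (1 / fact j) ((D ^^ j) u)"
proof -
  have "(\<Prod>i<j. - of_int (-1 - int i)) = (\<Prod>i<j. of_nat (Suc i) :: complex)"
    by (rule prod.cong) simp_all
  also have "\<dots> = fact j"
    by (induction j) (simp_all add: algebra_simps)
  finally have "(D ^^ j) u = smul (fact j) (Y u (-1 - int j) vac)"
    using Y_funpow_D[of j u "-1" vac] by (simp add: Y_vacuum_create)
  then have "Y u (-1 - int j) vac = smul (1 / fact j) ((D ^^ j) u)" by simp
  moreover have "- int j - 1 = -1 - int j" by simp
  ultimately show ?thesis by (simp only:)
qed

lemma funpow_D_mod: "(D ^^ j) u - smul ((- c) ^ j) u \<in> span {D v + smul c v | v. True}"
proof (induction j)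
  case (Suc j)
  have "(D ^^ Suc j) u - smul ((- c) ^ Suc j) u
      = (D ((D ^^ j) u) + smul c ((D ^^ j) u)) + smul (- c) ((D ^^ j) u - smul ((- c) ^ j) u)"
    by (simp add: scale_right_diff_distrib algebra_simps)
  also have "\<dots> \<in> span {D v + smul c v | v. True}"
    by (intro span_add span_scale Suc span_base) blast
  finally show ?case .
qed (simp add: span_zero)

lemma res_vacuum_right:
  "res smul Y a N u vac = (\<Sum>j<nat N. smul (rescoef a N (- int j - 1)) (Y u (- int j - 1) vac))"
proof -
  have "res smul Y a N u vac = (\<Sum>k\<in>{-N..<0}. smul (rescoef a N k) (Y u k vac))"
    unfolding res_def
    by (rule Sum_any.expand_superset) (auto simp: rescoef_def, meson Y_vacuum_nonneg not_less)
  also have "\<dots> = (\<Sum>j<nat N. smul (rescoef a N (- int j - 1)) (Y u (- int j - 1) vac))"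
    by (rule sum.reindex_bij_witness[of _ "\<lambda>k. - int k - 1" "\<lambda>k. nat (- k - 1)"]) auto
  finally show ?thesis .
qed

(* Y(u,x) vac = e^{xD} u, and D acts as -c modulo (D+c)V. *)

lemma res_vacuum_right_mod_D:
  assumes "N \<ge> 1"
  shows "res smul Y a N u vac - smul ((a - c) gchoose (nat N - 1)) u \<in> span {D v + smul c v | v. True}"
proof -
  let ?r = "\<lambda>j. rescoef a N (- int j - 1)"
  have binom: "(a - c) gchoose (nat N - 1) = (\<Sum>j<nat N. ?r j * (- c) ^ j / fact j)"
    using rescoef_exp_sum[OF assms, of a "- c"] by simp
  have "res smul Y a N u vac - smul ((a - c) gchoose (nat N - 1)) u
      = (\<Sum>j<nat N. smul (?r j / fact j) ((D ^^ j) u - smul ((- c) ^ j) u))"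
    unfolding res_vacuum_right Y_vacuum_neg binom scale_sum_left sum_subtractf[symmetric]
    by (intro sum.cong refl) (simp add: scale_right_diff_distrib)
  also have "\<dots> \<in> span {D v + smul c v | v. True}"
    by (intro span_sum span_scale funpow_D_mod)
  finally show ?thesis .
qed

lemma sum_res_vacuum_right_mod_D:
  assumes "\<And>i. i \<in> I \<Longrightarrow> N i \<ge> 1"
  shows "(\<Sum>i\<in>I. smul (co i) (res smul Y a (N i) u vac))
           - smul (\<Sum>i\<in>I. co i * ((a - c) gchoose (nat (N i) - 1))) u
         \<in> span {D v + smul c v | v. True}"
proof -
  have "(\<Sum>i\<in>I. smul (co i) (res smul Y a (N i) u vac))
           - smul (\<Sum>i\<in>I. co i * ((a - c) gchoose (nat (N i) - 1))) u
      = (\<Sum>i\<in>I. smul (co i) (res smul Y a (N i) u vac - smul ((a - c) gchoose (nat (N i) - 1)) u))"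
    by (simp add: scale_sum_left sum_subtractf scale_right_diff_distrib)
  also have "\<dots> \<in> span {D v + smul c v | v. True}"
    by (intro span_sum span_scale res_vacuum_right_mod_D assms)
  finally show ?thesis .
qed

abbreviation Otilde :: "rat \<Rightarrow> rat \<Rightarrow> 'v set" where
  "Otilde n m \<equiv> Ot smul Y vac g T n m"
abbreviation Otilde' :: "rat \<Rightarrow> rat \<Rightarrow> 'v set" where
  "Otilde' n m \<equiv> O1 smul Y vac g T n m"
abbreviation Otilde'' :: "rat \<Rightarrow> rat \<Rightarrow> 'v set" where
  "Otilde'' n m \<equiv> O2 smul Y g T n m"
abbreviation Otilde''' :: "rat \<Rightarrow> rat \<Rightarrow> 'v set" where
  "Otilde''' n m \<equiv> O3 smul Y vac g T n m"

lemma subspace_Otilde': "subspace (Otilde' n m)"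
  unfolding O1_def by (intro subspace_set_plus subspace_span)

lemma subspace_Otilde: "subspace (Otilde n m)"
  unfolding Ot_def O2_def O3_def by (intro subspace_set_plus subspace_span subspace_Otilde')

lemma D_span_subset_Otilde': "span {D v + smul (of_rat (m - n)) v | v. True} \<subseteq> Otilde' n m"
  unfolding O1_def D_def by (rule set_zero_plus2[OF span_zero])

lemma diam_in_Otilde': "diam smul Y g T m n u v \<in> Otilde' n m"
  unfolding O1_def by (rule subsetD[OF subset_set_plus_left[OF subspace_span]], rule span_base) blast

lemma Otilde'_Otilde''_subset: "Otilde' n m + Otilde'' n m \<subseteq> Otilde n m"
  unfolding Ot_def by (rule subset_set_plus_left) (simp add: O3_def)

lemma Otilde'_subset: "Otilde' n m \<subseteq> Otilde n m"
  by (rule order.trans[OF subset_set_plus_left Otilde'_Otilde''_subset]) (simp add: O2_def)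

lemma Otilde''_subset: "Otilde'' n m \<subseteq> Otilde n m"
  using set_zero_plus2[OF subspace_0[OF subspace_Otilde'], of "Otilde'' n m"] Otilde'_Otilde''_subset
  by blast

lemma Otilde'''_subset: "Otilde''' n m \<subseteq> Otilde n m"
  unfolding Ot_def
  by (intro set_zero_plus2 subspace_0 subspace_set_plus subspace_Otilde') (simp add: O2_def)

lemma linear_maps_Otilde_into:
  assumes "Vector_Spaces.linear smul smul f" and "subspace W"
    and "\<And>x. x \<in> Otilde' n m \<Longrightarrow> f x \<in> W" and "\<And>x. x \<in> Otilde'' n m \<Longrightarrow> f x \<in> W"
    and "\<And>x. x \<in> Otilde''' n m \<Longrightarrow> f x \<in> W" and "x \<in> Otilde n m"
  shows "f x \<in> W"
proof -
  obtain x1 x2 x3 where "x = x1 + x2 + x3" "x1 \<in> Otilde' n m" "x2 \<in> Otilde'' n m" "x3 \<in> Otilde''' n m"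
    using assms(6) unfolding Ot_def set_plus_def by blast
  then show ?thesis
    using assms(3-5) by (simp add: endo.linear_add[OF assms(1)] subspace_add[OF assms(2)])
qed

section \<open>Unit laws\<close>

lemma bullet_vacuum_left:
  assumes "m \<in> fracs T" and "n \<in> fracs T"
  shows "bullet m n n vac z = z"
proof -
  obtain km where km: "fl m = int km" using fracs_fl_nonneg[OF T_pos assms(1)] by (metis nonneg_eq_int)
  have delta: "delta T (bar T m) 0 = 1" "delta T (bar T n) (T - 0) = 0"
    using T_pos by (simp_all add: delta_def)
  have coef: "rescoef (of_int (fl m)) (fl m + 1 + int i) (-1) = (if i = 0 then 1 else 0)" for i
    by (simp add: rescoef_def km Lpow_def nat_add_distrib binomial_gbinomial[symmetric])
  have "bullet m n n vac z = (\<Sum>r<T. if r = 0 then bul_hom smul Y T 0 m n n vac z else 0)"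
    unfolding bul_def
    by (rule sum.cong) (auto simp: proj_fixed_point g_vacuum endo.linear_0[OF linear_bul_hom_left])
  also have "\<dots> = bul_hom smul Y T 0 m n n vac z"
    using T_pos by simp
  also have "\<dots> = (\<Sum>i\<in>{0..nat (fl n)}. if i = 0 then z else 0)"
    unfolding bul_hom_def delta
    by (rule trans[OF if_P], simp, rule sum.cong) (simp_all add: res_vacuum_left coef)
  finally show ?thesis by simp
qed

(* r0 is the only eigenspace index on which (-) *_{m,m}^n vac does not vanish.  There the
   exponent minus (m-n) is the integer fl n, and (fl n choose fl n + i) vanishes for i > 0. *)

lemma bul_hom_vacuum_right_selected:
  assumes m: "m \<in> fracs T" and n: "n \<in> fracs T"
  defines "r0 \<equiv> nat ((int (bar T m) - int (bar T n)) mod int T)"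
  shows "y - bul_hom smul Y T r0 m m n y vac \<in> span {D v + smul (of_rat (m - n)) v | v. True}"
proof -
  let ?c = "of_rat (m - n) :: complex"
  define d1 where "d1 = delta T (bar T m) r0"
  define d2 where "d2 = delta T (bar T n) (T - r0)"
  have d12: "d1 + d2 = 1" and shift: "int r0 + int (bar T n) - int (bar T m) = int T * (1 - d1)"
    using delta_residue_index[OF fracs_bar_less[OF T_pos m] fracs_bar_less[OF T_pos n]]
    unfolding r0_def d1_def d2_def by simp_all
  define a where "a = -1 + of_int (fl m) + of_int d1 + of_nat r0 / (of_nat T :: complex)"
  have a_c: "a - ?c = of_int (fl n)"
    using fracs_exponent_diff[OF T_pos m n, of d1 r0] T_pos unfolding a_def shift by simp
  obtain kn where kn: "fl n = int kn" using fracs_fl_nonneg[OF T_pos n] nonneg_int_cases by blast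
  define N where "N i = fl m + fl n - fl m + d1 + d2 + int i" for i :: nat
  define co where "co i = (-1) ^ i * (of_int (fl m + fl n - fl m - 1 + d1 + d2 + int i) gchoose i :: complex)"
    for i :: nat
  have N: "N i \<ge> 1" "nat (N i) - 1 = kn + i" for i
    unfolding N_def using d12 kn by simp_all
  have "(int (bar T m) - int (bar T n)) mod int T = int r0 mod int T"
    unfolding r0_def using T_pos by simp
  then have "bul_hom smul Y T r0 m m n y vac = (\<Sum>i\<in>{0..nat (fl m)}. smul (co i) (res smul Y a (N i) y vac))"
    unfolding bul_hom_def co_def N_def a_def d1_def d2_def by simp
  moreover have "co i * ((a - ?c) gchoose (nat (N i) - 1)) = (if i = 0 then 1 else 0)" for i
    unfolding a_c N(2) kn by (simp add: co_def binomial_gbinomial[symmetric] binomial_eq_0)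
  then have "(\<Sum>i\<in>{0..nat (fl m)}. co i * ((a - ?c) gchoose (nat (N i) - 1))) = 1"
    by simp
  ultimately have "bul_hom smul Y T r0 m m n y vac - y \<in> span {D v + smul ?c v | v. True}"
    using sum_res_vacuum_right_mod_D[of "{0..nat (fl m)}" N co a y ?c] N(1) by simp
  then show ?thesis using span_neg by fastforce
qed

(* Off r0 the exponent minus (m-n) is not an integer, so the binomial coefficient is invertible
   and the component is a multiple of a diamond product modulo (D+m-n)V. *)

lemma proj_in_Otilde'_unselected:
  assumes m: "m \<in> fracs T" and n: "n \<in> fracs T" and r: "r < T"
    and unselected: "r \<noteq> nat ((int (bar T m) - int (bar T n)) mod int T)"
  shows "proj smul g T r x \<in> Otilde' n m"
proof -
  let ?y = "proj smul g T r x"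
  let ?c = "of_rat (m - n) :: complex"
  define d where "d = delta T (bar T m) r"
  define a where "a = -1 + of_int d + of_int (fl m) + of_nat r / (of_nat T :: complex)"
  define N where "N = fl m + fl n + d + delta T (bar T n) (T - r) + 1"
  let ?G = "(a - ?c) gchoose (nat N - 1)"
  have N: "N \<ge> 1"
    unfolding N_def d_def delta_def using fracs_fl_nonneg[OF T_pos m] fracs_fl_nonneg[OF T_pos n] by simp
  have "diam smul Y g T m n ?y vac = (\<Sum>s<T. if s = r then diam_hom smul Y T r m n ?y vac else 0)"
    unfolding diam_def
    by (rule sum.cong) (use r in \<open>simp_all add: proj_proj diam_hom_def endo.linear_0[OF linear_res_left]\<close>)
  also have "\<dots> = res smul Y a N ?y vac"
    using r unfolding diam_hom_def a_def N_def d_def by simp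
  finally have "smul ?G ?y = diam smul Y g T m n ?y vac - (res smul Y a N ?y vac - smul ?G ?y)"
    by simp
  also have "\<dots> \<in> Otilde' n m"
    by (rule subspace_diff[OF subspace_Otilde' diam_in_Otilde'
          subsetD[OF D_span_subset_Otilde' res_vacuum_right_mod_D[OF N]]])
  finally have "smul (1 / ?G) (smul ?G ?y) \<in> Otilde' n m"
    by (rule subspace_scale[OF subspace_Otilde'])
  moreover have "?G \<noteq> 0"
  proof (rule gbinomial_nonzero_if_not_nat)
    have not_dvd: "\<not> int T dvd int r + int (bar T n) - int (bar T m)"
      using unselected dvd_iff_residue_index[OF r] by blast
    have "a - ?c = of_int (-1 + d + fl n) + of_int (int r + int (bar T n) - int (bar T m)) / of_nat T"
      using fracs_exponent_diff[OF T_pos m n, of d r] unfolding a_def by (simp add: ac_simps)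
    then show "a - ?c \<noteq> of_nat j" for j
      using int_plus_fraction_not_nat[OF T_pos not_dvd] by presburger
  qed
  ultimately show ?thesis by simp
qed

lemma bullet_vacuum_right_mod_Otilde':
  assumes m: "m \<in> fracs T" and n: "n \<in> fracs T"
  shows "x - bullet m m n x vac \<in> Otilde' n m"
proof -
  define r0 where "r0 = nat ((int (bar T m) - int (bar T n)) mod int T)"
  have "bullet m m n x vac = (\<Sum>r<T. if r = r0 then bul_hom smul Y T r0 m m n (proj smul g T r0 x) vac else 0)"
    unfolding bul_def
    by (rule sum.cong) (auto simp: bul_hom_def r0_def mod_eq_iff_residue_index)
  then have "x - bullet m m n x vac = (\<Sum>r<T. proj smul g T r x)
      - (\<Sum>r<T. if r = r0 then bul_hom smul Y T r0 m m n (proj smul g T r0 x) vac else 0)"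
    by (simp only: sum_proj)
  also have "\<dots> = (\<Sum>r<T. if r = r0
      then proj smul g T r0 x - bul_hom smul Y T r0 m m n (proj smul g T r0 x) vac else proj smul g T r x)"
    unfolding sum_subtractf[symmetric] by (rule sum.cong) auto
  also have "\<dots> \<in> Otilde' n m"
    using subsetD[OF D_span_subset_Otilde' bul_hom_vacuum_right_selected[OF m n]]
      proj_in_Otilde'_unselected[OF m n]
    by (intro subspace_sum[OF subspace_Otilde']) (simp add: r0_def)
  finally show ?thesis .
qed

section \<open>Closure under the products\<close>

abbreviation assoc :: "rat \<Rightarrow> rat \<Rightarrow> rat \<Rightarrow> rat \<Rightarrow> 'v \<Rightarrow> 'v \<Rightarrow> 'v \<Rightarrow> 'v" where
  "assoc m p1 p2 p3 a b c \<equiv> bullet m p1 p3 (bullet p1 p2 p3 a b) c - bullet m p2 p3 a (bullet m p1 p2 b c)"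

lemma bullet_diff_left: "bullet m p n (a - a') b = bullet m p n a b - bullet m p n a' b"
  and bullet_diff_right: "bullet m p n a (b - b') = bullet m p n a b - bullet m p n a b'"
  and bullet_add_right: "bullet m p n a (b + b') = bullet m p n a b + bullet m p n a b'"
  using endo.linear_diff[OF linear_bullet_left] endo.linear_diff[OF linear_bullet_right]
    endo.linear_add[OF linear_bullet_right] by blast+

(* The pentagon identity; it only uses bilinearity. *)

lemma bullet_assoc_expand:
  "bullet m p1 t (assoc p1 q1 q2 t a b c) v
   = assoc m p1 q1 t (bullet q1 q2 t a b) c v + assoc m q1 q2 t a b (bullet m p1 q1 c v)
     - assoc m p1 q2 t a (bullet p1 q1 q2 b c) v - bullet m q2 t a (assoc m p1 q1 q2 b c v)"
  by (simp add: bullet_diff_left bullet_diff_right)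

lemma bullet_in_bulset: "a \<in> A \<Longrightarrow> b \<in> B \<Longrightarrow> bullet m p n a b \<in> bulset smul Y g T m p n A B"
  unfolding bulset_def by (rule span_base) blast

lemma bullet_assoc_in_Otilde'':
  "p1 \<in> fracs T \<Longrightarrow> p2 \<in> fracs T \<Longrightarrow> p3 \<in> fracs T \<Longrightarrow>
   bullet m p3 n u (assoc m p1 p2 p3 a b c) \<in> Otilde'' n m"
  unfolding O2_def by (rule span_base) blast

lemma assoc_in_Otilde'':
  assumes "m \<in> fracs T" and "n \<in> fracs T" and "p1 \<in> fracs T" and "p2 \<in> fracs T"
  shows "assoc m p1 p2 n a b c \<in> Otilde'' n m"
  using bullet_assoc_in_Otilde''[OF assms(3,4,2), of m n vac a b c] bullet_vacuum_left[OF assms(1,2)]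
  by simp

lemma bullet_in_Otilde''':
  assumes "p1 \<in> fracs T" and "p2 \<in> fracs T"
    and "b \<in> bulset smul Y g T p1 p2 n UNIV (Otilde' p2 p1)"
  shows "bullet m p1 n b v \<in> Otilde''' n m"
  unfolding O3_def
  by (rule span_base, rule UnionI[OF _ bullet_in_bulset[OF assms(3) UNIV_I]]) (use assms in blast)

lemma linear_maps_Otilde''_into:
  assumes "Vector_Spaces.linear smul smul f" and "subspace W"
    and "\<And>u a b c p1 p2 p3. p1 \<in> fracs T \<Longrightarrow> p2 \<in> fracs T \<Longrightarrow> p3 \<in> fracs T \<Longrightarrow>
           f (bullet m p3 n u (assoc m p1 p2 p3 a b c)) \<in> W"
    and "x \<in> Otilde'' n m"
  shows "f x \<in> W"
  using assms(4) unfolding O2_def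
  by (rule endo.linear_maps_span_into[OF assms(1,2), rotated]) (use assms(3) in blast)

lemma linear_maps_Otilde'''_into:
  assumes f: "Vector_Spaces.linear smul smul f" and W: "subspace W"
    and gen: "\<And>p1 p2 w ob v. p1 \<in> fracs T \<Longrightarrow> p2 \<in> fracs T \<Longrightarrow> ob \<in> Otilde' p2 p1 \<Longrightarrow>
           f (bullet m p1 n (bullet p1 p2 n w ob) v) \<in> W"
    and x: "x \<in> Otilde''' n m"
  shows "f x \<in> W"
  using x unfolding O3_def
proof (rule endo.linear_maps_span_into[OF f W, rotated])
  fix s assume "s \<in> \<Union>{bulset smul Y g T m p1 n (bulset smul Y g T p1 p2 n UNIV (Otilde' p2 p1)) UNIV
      | p1 p2. p1 \<in> fracs T \<and> p2 \<in> fracs T}"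
  then obtain p1 p2 where p: "p1 \<in> fracs T" "p2 \<in> fracs T"
    and s: "s \<in> bulset smul Y g T m p1 n (bulset smul Y g T p1 p2 n UNIV (Otilde' p2 p1)) UNIV"
    by blast
  show "f s \<in> W"
    using s unfolding bulset_def[of _ _ _ _ m]
  proof (rule endo.linear_maps_span_into[OF f W, rotated])
    fix s' assume "s' \<in> {bullet m p1 n b v | b v. b \<in> bulset smul Y g T p1 p2 n UNIV (Otilde' p2 p1) \<and> v \<in> UNIV}"
    then obtain b v where s': "s' = bullet m p1 n b v"
      and b: "b \<in> bulset smul Y g T p1 p2 n UNIV (Otilde' p2 p1)" by blast
    have "Vector_Spaces.linear smul smul (\<lambda>b. f (bullet m p1 n b v))"
      using Vector_Spaces.linear_compose[OF linear_bullet_left f] by (simp add: comp_def)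
    moreover have "f (bullet m p1 n t v) \<in> W"
      if "t \<in> {bullet p1 p2 n w ob | w ob. w \<in> UNIV \<and> ob \<in> Otilde' p2 p1}" for t
      using that gen p by blast
    ultimately show "f s' \<in> W"
      unfolding s' using endo.linear_maps_span_into[OF _ W _ b[unfolded bulset_def]] by blast
  qed
qed

lemma Otilde_diff: "x \<in> Otilde n m \<Longrightarrow> y \<in> Otilde n m \<Longrightarrow> x - y \<in> Otilde n m"
  and Otilde_add: "x \<in> Otilde n m \<Longrightarrow> y \<in> Otilde n m \<Longrightarrow> x + y \<in> Otilde n m"
  by (simp_all add: subspace_diff subspace_add subspace_Otilde)

lemmas Otilde'_in_Otilde = subsetD[OF Otilde'_subset]
  and Otilde''_in_Otilde = subsetD[OF Otilde''_subset]
  and Otilde'''_in_Otilde = subsetD[OF Otilde'''_subset]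

lemma assoc_in_Otilde:
  "m \<in> fracs T \<Longrightarrow> n \<in> fracs T \<Longrightarrow> p1 \<in> fracs T \<Longrightarrow> p2 \<in> fracs T \<Longrightarrow>
   assoc m p1 p2 n a b c \<in> Otilde n m"
  by (rule Otilde''_in_Otilde[OF assoc_in_Otilde''])

lemma bullet_Otilde'_right:
  assumes m: "m \<in> fracs T" and n: "n \<in> fracs T" and p: "p \<in> fracs T" and b: "b \<in> Otilde' p m"
  shows "bullet m p n a b \<in> Otilde n m"
proof -
  let ?x = "bullet m p n a b"
  have "?x - bullet m m n ?x vac \<in> Otilde n m"
    by (rule Otilde'_in_Otilde[OF bullet_vacuum_right_mod_Otilde'[OF m n]])
  moreover have "bullet m m n ?x vac \<in> Otilde n m"
    by (rule Otilde'''_in_Otilde[OF bullet_in_Otilde'''[OF m p bullet_in_bulset[OF UNIV_I b]]])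
  ultimately show ?thesis using Otilde_add by fastforce
qed

lemma bullet_Otilde''_right:
  assumes m: "m \<in> fracs T" and n: "n \<in> fracs T" and p: "p \<in> fracs T" and b: "b \<in> Otilde'' p m"
  shows "bullet m p n a b \<in> Otilde n m"
  using b
proof (rule linear_maps_Otilde''_into[OF linear_bullet_right subspace_Otilde, rotated])
  fix u a' b' c' p1 p2 p3
  assume ps: "p1 \<in> fracs T" "p2 \<in> fracs T" "p3 \<in> fracs T"
  let ?X = "assoc m p1 p2 p3 a' b' c'"
  have "bullet m p n a (bullet m p3 p u ?X) = bullet m p3 n (bullet p3 p n a u) ?X - assoc m p3 p n a u ?X"
    by simp
  also have "\<dots> \<in> Otilde n m"
    by (intro Otilde_diff Otilde''_in_Otilde[OF bullet_assoc_in_Otilde''[OF ps]] assoc_in_Otilde m n p ps)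
  finally show "bullet m p n a (bullet m p3 p u ?X) \<in> Otilde n m" .
qed

lemma bullet_Otilde'''_right:
  assumes m: "m \<in> fracs T" and n: "n \<in> fracs T" and p: "p \<in> fracs T" and b: "b \<in> Otilde''' p m"
  shows "bullet m p n a b \<in> Otilde n m"
  using b
proof (rule linear_maps_Otilde'''_into[OF linear_bullet_right subspace_Otilde, rotated])
  fix p1 p2 w ob v
  assume ps: "p1 \<in> fracs T" "p2 \<in> fracs T" and ob: "ob \<in> Otilde' p2 p1"
  let ?t = "bullet p1 p2 p w ob"
  have "bullet m p n a (bullet m p1 p ?t v)
      = bullet m p1 n (bullet p1 p2 n (bullet p2 p n a w) ob) v - bullet m p1 n (assoc p1 p2 p n a w ob) v
        - assoc m p1 p n a ?t v"
    by (simp add: bullet_diff_left)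
  also have "\<dots> \<in> Otilde n m"
  proof (rule Otilde_diff[OF Otilde_diff])
    show "bullet m p1 n (bullet p1 p2 n (bullet p2 p n a w) ob) v \<in> Otilde n m"
      by (rule Otilde'''_in_Otilde[OF bullet_in_Otilde'''[OF ps bullet_in_bulset[OF UNIV_I ob]]])
    show "bullet m p1 n (assoc p1 p2 p n a w ob) v \<in> Otilde n m"
      unfolding bullet_assoc_expand
      by (rule Otilde_diff[OF Otilde_diff[OF Otilde_add]] assoc_in_Otilde
          Otilde''_in_Otilde[OF bullet_assoc_in_Otilde''] m n p ps)+
    show "assoc m p1 p n a ?t v \<in> Otilde n m"
      by (rule assoc_in_Otilde[OF m n ps(1) p])
  qed
  finally show "bullet m p n a (bullet m p1 p ?t v) \<in> Otilde n m" .
qed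

lemma bullet_Otilde_right:
  assumes "m \<in> fracs T" and "n \<in> fracs T" and "p \<in> fracs T" and "b \<in> Otilde p m"
  shows "bullet m p n a b \<in> Otilde n m"
  using linear_bullet_right subspace_Otilde
    bullet_Otilde'_right[OF assms(1-3)] bullet_Otilde''_right[OF assms(1-3)] bullet_Otilde'''_right[OF assms(1-3)]
    assms(4)
  by (rule linear_maps_Otilde_into)

lemma bullet_Otilde'_left:
  assumes m: "m \<in> fracs T" and n: "n \<in> fracs T" and p: "p \<in> fracs T" and b: "b \<in> Otilde' n p"
  shows "bullet m p n b v \<in> Otilde n m"
proof -
  have "bullet m p n (bullet p n n vac b) v \<in> Otilde n m"
    by (rule Otilde'''_in_Otilde[OF bullet_in_Otilde'''[OF p n bullet_in_bulset[OF UNIV_I b]]])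
  then show ?thesis by (simp add: bullet_vacuum_left[OF p n])
qed

lemma bullet_Otilde''_left:
  assumes m: "m \<in> fracs T" and n: "n \<in> fracs T" and p: "p \<in> fracs T" and b: "b \<in> Otilde'' n p"
  shows "bullet m p n b v \<in> Otilde n m"
  using b
proof (rule linear_maps_Otilde''_into[OF linear_bullet_left subspace_Otilde, rotated])
  fix u a b c p1 p2 p3
  assume ps: "p1 \<in> fracs T" "p2 \<in> fracs T" "p3 \<in> fracs T"
  let ?X = "assoc p p1 p2 p3 a b c"
  let ?E = "assoc m p p1 p2 b c v"
  have "bullet m p n (bullet p p3 n u ?X) v
      = assoc m p p3 n u ?X v
        + (bullet m p3 n u (assoc m p p1 p3 (bullet p1 p2 p3 a b) c v)
           + bullet m p3 n u (assoc m p1 p2 p3 a b (bullet m p p1 c v))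
           - bullet m p3 n u (assoc m p p2 p3 a (bullet p p1 p2 b c) v)
           - (bullet m p2 n (bullet p2 p3 n u a) ?E - assoc m p2 p3 n u a ?E))"
    by (simp add: bullet_assoc_expand bullet_diff_right bullet_add_right)
  also have "\<dots> \<in> Otilde n m"
    by (rule Otilde_add Otilde_diff assoc_in_Otilde Otilde''_in_Otilde[OF bullet_assoc_in_Otilde'']
        m n p ps)+
  finally show "bullet m p n (bullet p p3 n u ?X) v \<in> Otilde n m" .
qed

lemma bullet_Otilde'''_left:
  assumes m: "m \<in> fracs T" and n: "n \<in> fracs T" and p: "p \<in> fracs T" and b: "b \<in> Otilde''' n p"
  shows "bullet m p n b v \<in> Otilde n m"
  using b
proof (rule linear_maps_Otilde'''_into[OF linear_bullet_left subspace_Otilde, rotated])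
  fix p1 p2 w ob v'
  assume ps: "p1 \<in> fracs T" "p2 \<in> fracs T" and ob: "ob \<in> Otilde' p2 p1"
  let ?t = "bullet p1 p2 n w ob"
  have "bullet m p n (bullet p p1 n ?t v') v = assoc m p p1 n ?t v' v + bullet m p1 n ?t (bullet m p p1 v' v)"
    by simp
  also have "\<dots> \<in> Otilde n m"
    by (rule Otilde_add[OF assoc_in_Otilde[OF m n p ps(1)]
          Otilde'''_in_Otilde[OF bullet_in_Otilde'''[OF ps bullet_in_bulset[OF UNIV_I ob]]]])
  finally show "bullet m p n (bullet p p1 n ?t v') v \<in> Otilde n m" .
qed

lemma bullet_Otilde_left:
  assumes "m \<in> fracs T" and "n \<in> fracs T" and "p \<in> fracs T" and "b \<in> Otilde n p"
  shows "bullet m p n b v \<in> Otilde n m"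
  using linear_bullet_left subspace_Otilde
    bullet_Otilde'_left[OF assms(1-3)] bullet_Otilde''_left[OF assms(1-3)] bullet_Otilde'''_left[OF assms(1-3)]
    assms(4)
  by (rule linear_maps_Otilde_into)

lemma bulset_UNIV_Otilde_subset:
  assumes "m \<in> fracs T" and "n \<in> fracs T" and "p \<in> fracs T"
  shows "bulset smul Y g T m p n UNIV (Otilde p m) \<subseteq> Otilde n m"
  unfolding bulset_def using bullet_Otilde_right[OF assms]
  by (intro span_minimal subspace_Otilde) blast

lemma bulset_Otilde_UNIV_subset:
  assumes "m \<in> fracs T" and "n \<in> fracs T" and "p \<in> fracs T"
  shows "bulset smul Y g T m p n (Otilde n p) UNIV \<subseteq> Otilde n m"
  unfolding bulset_def using bullet_Otilde_left[OF assms]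
  by (intro span_minimal subspace_Otilde) blast

end

theorem lemma3p7:
  fixes smul :: "complex \<Rightarrow> 'v::ab_group_add \<Rightarrow> 'v"
    and Y :: "'v \<Rightarrow> int \<Rightarrow> 'v \<Rightarrow> 'v" and vac :: 'v
    and g :: "'v \<Rightarrow> 'v" and T :: nat and m n p :: rat
  assumes VA: "vertex_algebra smul Y vac"
    and aut: "va_automorphism smul Y vac g"
    and T: "T > 0" and gT: "g ^^ T = id"
    and m: "m \<in> fracs T" and n: "n \<in> fracs T" and p: "p \<in> fracs T"
  shows "bulset smul Y g T m p n UNIV (Ot smul Y vac g T p m) \<subseteq> Ot smul Y vac g T n m
       \<and> bulset smul Y g T m p n (Ot smul Y vac g T n p) UNIV \<subseteq> Ot smul Y vac g T n m
       \<and> bulset smul Y g T m n n UNIV (Ot smul Y vac g T n m) \<subseteq> Ot smul Y vac g T n m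
       \<and> bulset smul Y g T m m n (Ot smul Y vac g T n m) UNIV \<subseteq> Ot smul Y vac g T n m"
proof -
  interpret vertex_algebra_automorphism smul Y vac g T
    using VA aut T gT by unfold_locales
  show ?thesis
    by (intro conjI bulset_UNIV_Otilde_subset bulset_Otilde_UNIV_subset m n p)
qed

end
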